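(* Let $3\le d\le 50$, let $(\alpha,\beta)\in\mathcal{A}_d$, let $\ell>1000$ be a prime, and let $(y_1,y_2)$ be integers satisfying \[ 4\beta y_2^\ell-\alpha^2 y_1^{2\ell}=d^2-1, \] with $|y_1|\ge 2$, $y_2\ge 2$ and $y_2\ne y_1^2$. Let $A_2=\max\{y_1^2,y_2\}$. Then \[ 1\le \frac{\log A_2}{\log y_1^2}\le 1.03 . \]
   Context: For a prime $q$ let $\mu_q=\operatorname{ord}_q(d^2-1)$ and $\nu_q=\operatorname{ord}_q(d)$. To each prime $q$ associate a finite set $T_q\subset\mathbb{Z}^2$: if $q\nmid d(d^2-1)$, $T_q=\{(0,0)\}$. For $q=2$: $T_2=\{(0,1-\nu_2)\}$ if $2\mid d$; $T_2=\{(1,0),(\mu_2/2,1-\mu_2/2),(3-\mu_2,\mu_2-2)\}$ if $2\nmid d$ and $\mu_2$ is even; $T_2=\{(1,0),(3-\mu_2,\mu_2-2)\}$ if $2\nmid d$ and $\mu_2$ is odd. For odd $q\mid d$: $T_q=\{(-\nu_q,0),(0,-\nu_q)\}$. For odd $q\mid d^2-1$: $T_q=\{(0,0),(-\mu_q,\mu_q),(\mu_q/2,-\mu_q/2)\}$ if $\mu_q$ is even, and $T_q=\{(0,0),(-\mu_q,\mu_q)\}$ if $\mu_q$ is odd. Then $\mathcal{A}_d$ is the set of pairs of positive rationals $(\alpha,\beta)$ with $(\operatorname{ord}_q(\alpha),\operatorname{ord}_q(\beta))\in T_q$ for every prime $q$. *)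

theory Defs
  imports "HOL-Analysis.Analysis" "HOL-Computational_Algebra.Primes"
begin

definition rat_ord :: "int \<Rightarrow> rat \<Rightarrow> int" where
  "rat_ord q r = (case quotient_of r of (a, b) \<Rightarrow>
      int (multiplicity q a) - int (multiplicity q b))"

definition T_set :: "int \<Rightarrow> int \<Rightarrow> (int \<times> int) set" where
  "T_set d q = (let mu = int (multiplicity q (d^2 - 1)); nu = int (multiplicity q d) in
     if \<not> q dvd d * (d^2 - 1) then {(0, 0)}
     else if q = 2 then
       (if 2 dvd d then {(0, 1 - nu)}
        else if even mu then {(1, 0), (mu div 2, 1 - mu div 2), (3 - mu, mu - 2)}
        else {(1, 0), (3 - mu, mu - 2)})
     else if q dvd d then {(-nu, 0), (0, -nu)}
     else if even mu then {(0, 0), (-mu, mu), (mu div 2, -(mu div 2))}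
     else {(0, 0), (-mu, mu)})"

definition A_set :: "int \<Rightarrow> (rat \<times> rat) set" where
  "A_set d = {(\<alpha>, \<beta>). \<alpha> > 0 \<and> \<beta> > 0 \<and>
      (\<forall>q::int. prime q \<longrightarrow> (rat_ord q \<alpha>, rat_ord q \<beta>) \<in> T_set d q)}"

end

theory Submission
  imports Defs
begin

text \<open>Reading off the sets T_q, the numerator of \<open>\<alpha>\<close> divides 8(d^2 - 1) and the denominator
  of \<open>\<beta>\<close> divides 8d(d^2 - 1). For d \<le> 50 the equation then gives y2^l \<le> 2^47 (y1^2)^l, so
  log y2 \<le> log y1^2 + 47 log 2 / l, and since l > 1000 and y1^2 \<ge> 4 the error term is at most
  0.03 log y1^2.\<close>

lemma multiplicity_eq_0_if_coprime:
  fixes a b q :: "'a :: factorial_semiring_gcd"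
  assumes "prime q" "coprime a b"
  shows "multiplicity q a = 0 \<or> multiplicity q b = 0"
proof (rule ccontr)
  assume "\<not> ?thesis"
  then have "q dvd a" "q dvd b"
    using not_dvd_imp_multiplicity_0 by metis+
  then have "is_unit q" by (rule coprime_common_divisor[OF assms(2)])
  then show False using assms(1) not_prime_unit by blast
qed

lemma multiplicity_quotient_of:
  assumes "prime q" "quotient_of r = (a, b)"
  shows "multiplicity q a = nat (rat_ord q r)"
    and "multiplicity q b = nat (- rat_ord q r)"
  using multiplicity_eq_0_if_coprime[OF assms(1) quotient_of_coprime[OF assms(2)]]
  by (auto simp: rat_ord_def assms(2))

lemma rat_le_of_rat_ord_le:
  fixes r :: rat and N :: int
  assumes "r > 0" "N > 0" and ord: "\<And>q. prime q \<Longrightarrow> rat_ord q r \<le> int (multiplicity q N)"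
  shows "r \<le> of_int N"
proof -
  obtain a b where qr: "quotient_of r = (a, b)" by (cases "quotient_of r") auto
  have b: "b > 0" and r: "r = of_int a / of_int b"
    using quotient_of_denom_pos[OF qr] quotient_of_div[OF qr] by simp_all
  then have a: "a > 0" using \<open>r > 0\<close> by (simp add: zero_less_divide_iff)
  have "a dvd N"
  proof (rule multiplicity_le_imp_dvd)
    fix q :: int assume q: "prime q"
    show "multiplicity q a \<le> multiplicity q N"
      using ord[OF q] unfolding multiplicity_quotient_of(1)[OF q qr] by linarith
  qed (use a in simp)
  then have "a \<le> N" using \<open>N > 0\<close> by (simp add: zdvd_imp_le)
  moreover have "r \<le> of_int a" using r a b by (simp add: divide_le_eq)
  ultimately show ?thesis by (meson of_int_le_iff order_trans)
qed

lemma rat_ge_of_rat_ord_ge: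
  fixes r :: rat and N :: int
  assumes "r > 0" "N > 0" and ord: "\<And>q. prime q \<Longrightarrow> - rat_ord q r \<le> int (multiplicity q N)"
  shows "1 / of_int N \<le> r"
proof -
  obtain a b where qr: "quotient_of r = (a, b)" by (cases "quotient_of r") auto
  have b: "b > 0" and r: "r = of_int a / of_int b"
    using quotient_of_denom_pos[OF qr] quotient_of_div[OF qr] by simp_all
  then have a: "a > 0" using \<open>r > 0\<close> by (simp add: zero_less_divide_iff)
  have "b dvd N"
  proof (rule multiplicity_le_imp_dvd)
    fix q :: int assume q: "prime q"
    show "multiplicity q b \<le> multiplicity q N"
      using ord[OF q] unfolding multiplicity_quotient_of(2)[OF q qr] by linarith
  qed (use b in simp)
  then have "b \<le> N" using \<open>N > 0\<close> by (simp add: zdvd_imp_le)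
  then have "1 / of_int N \<le> (1::rat) / of_int b" using b by (simp add: frac_le)
  also have "\<dots> \<le> r" using r a b by (simp add: divide_right_mono)
  finally show ?thesis .
qed

lemma multiplicity_2_8: "multiplicity (2::int) 8 = 3"
  using multiplicity_same_power[of "2::int" 3] by simp

lemma T_set_bounds:
  fixes d q x y :: int
  assumes "prime q" "(x, y) \<in> T_set d q"
  shows "x \<le> int (multiplicity q (8::int)) + int (multiplicity q (d^2 - 1))"
    and "- y \<le> int (multiplicity q (8::int)) + int (multiplicity q d) + int (multiplicity q (d^2 - 1))"
  using assms(2) by (auto simp: T_set_def Let_def multiplicity_2_8 split: if_splits)

lemma prime_multiplicity_mult_distrib:
  fixes q x y :: "'a :: factorial_semiring"
  assumes "prime q" "x \<noteq> 0" "y \<noteq> 0"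
  shows "multiplicity q (x * y) = multiplicity q x + multiplicity q y"
  using assms by (intro prime_elem_multiplicity_mult_distrib) (auto intro: prime_imp_prime_elem)

lemma A_setD:
  assumes "(\<alpha>, \<beta>) \<in> A_set d"
  shows "\<alpha> > 0" "\<beta> > 0" "\<And>q. prime q \<Longrightarrow> (rat_ord q \<alpha>, rat_ord q \<beta>) \<in> T_set d q"
  using assms by (auto simp: A_set_def)

lemma A_set_fst_le:
  assumes "(\<alpha>, \<beta>) \<in> A_set d" "d \<ge> 2"
  shows "\<alpha> \<le> of_int (8 * (d^2 - 1))"
proof (rule rat_le_of_rat_ord_le)
  have "2^2 \<le> d^2" using power_mono[OF assms(2), of 2] by simp
  then have d1: "d^2 - 1 > 0" by simp
  then show "8 * (d^2 - 1) > 0" by simp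
  fix q :: int assume q: "prime q"
  have "multiplicity q (8 * (d^2 - 1)) = multiplicity q (8::int) + multiplicity q (d^2 - 1)"
    by (rule prime_multiplicity_mult_distrib[OF q]) (use d1 in linarith)+
  with T_set_bounds(1)[OF q A_setD(3)[OF assms(1) q]]
  show "rat_ord q \<alpha> \<le> int (multiplicity q (8 * (d^2 - 1)))" by simp
qed (rule A_setD(1)[OF assms(1)])

lemma A_set_snd_ge:
  assumes "(\<alpha>, \<beta>) \<in> A_set d" "d \<ge> 2"
  shows "1 / of_int (8 * d * (d^2 - 1)) \<le> \<beta>"
proof (rule rat_ge_of_rat_ord_ge)
  have "2^2 \<le> d^2" using power_mono[OF assms(2), of 2] by simp
  then have d1: "d^2 - 1 > 0" by simp
  then show "8 * d * (d^2 - 1) > 0" using assms(2) by simp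
  fix q :: int assume q: "prime q"
  have "multiplicity q (8 * d * (d^2 - 1)) = multiplicity q (8 * d) + multiplicity q (d^2 - 1)"
    by (rule prime_multiplicity_mult_distrib[OF q]) (use d1 assms(2) in linarith)+
  also have "multiplicity q (8 * d) = multiplicity q (8::int) + multiplicity q d"
    by (rule prime_multiplicity_mult_distrib[OF q]) (use assms(2) in linarith)+
  finally show "- rat_ord q \<beta> \<le> int (multiplicity q (8 * d * (d^2 - 1)))"
    using T_set_bounds(2)[OF q A_setD(3)[OF assms(1) q]] by simp
qed (rule A_setD(2)[OF assms(1)])

lemma power_le_of_equation:
  fixes a b D Y Z :: real
  assumes "4 * b * Z ^ n - a^2 * Y ^ n = D"
    and "0 < a" "a \<le> A" "0 < B" "B \<le> b" "D \<le> E" "0 \<le> E" "1 \<le> Y ^ n"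
  shows "Z ^ n \<le> (A^2 + E) / (4 * B) * Y ^ n"
proof -
  have "Z ^ n = (a^2 * Y ^ n + D) / (4 * b)" using assms(1,4,5) by (simp add: field_simps)
  also have "\<dots> \<le> (A^2 * Y ^ n + E * Y ^ n) / (4 * b)"
  proof -
    have "a^2 \<le> A^2" using assms(2,3) by (simp add: power_mono)
    moreover have "E \<le> E * Y ^ n" using assms(7,8) by (simp add: mult_le_cancel_left1)
    ultimately show ?thesis using assms(4,5,6,8)
      by (intro divide_right_mono add_mono mult_right_mono) auto
  qed
  also have "\<dots> \<le> (A^2 * Y ^ n + E * Y ^ n) / (4 * B)"
    using assms(4,5,7,8) by (intro divide_left_mono) (auto intro!: add_nonneg_nonneg)
  finally show ?thesis by (simp add: algebra_simps)
qed

lemma ln_le_of_power_le: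
  fixes Y Z C :: real
  assumes "0 < Y" "0 < Z" "0 < C" "Z ^ n \<le> C * Y ^ n"
  shows "real n * ln Z \<le> ln C + real n * ln Y"
proof -
  have "ln (Z ^ n) \<le> ln (C * Y ^ n)" using assms by simp
  then show ?thesis using assms by (simp add: ln_mult ln_realpow)
qed

lemma ln_le_of_power_le_2_47:
  fixes Y Z :: real
  assumes "Z ^ n \<le> 2^47 * Y ^ n" "4 \<le> Y" "0 < Z" "1001 \<le> n"
  shows "ln Z \<le> 1.03 * ln Y"
proof -
  have "real n * ln Z \<le> ln (2^47) + real n * ln Y"
    by (rule ln_le_of_power_le[OF _ assms(3) _ assms(1)]) (use assms(2) in auto)
  also have "ln ((2::real)^47) = 47 * ln 2" using ln_realpow[of 2 47] by simp
  also have "47 * ln (2::real) \<le> real n * (0.03 * ln Y)"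
  proof -
    have "2 * ln 2 = ln (4::real)" using ln_realpow[of 2 2] by simp
    also have "\<dots> \<le> ln Y" using assms(2) by simp
    finally have "2 * ln 2 \<le> ln Y" .
    have "0 < ln (2::real)" by simp
    have "47 * ln (2::real) \<le> 1001 * (0.03 * ln Y)"
      using \<open>2 * ln 2 \<le> ln Y\<close> by simp (use \<open>0 < ln 2\<close> in linarith)
    also have "\<dots> \<le> real n * (0.03 * ln Y)"
      using assms by (intro mult_right_mono) auto
    finally show ?thesis .
  qed
  finally have "real n * ln Z \<le> real n * (1.03 * ln Y)" by (simp add: algebra_simps)
  then show ?thesis using assms(4) by simp
qed

lemma A_set_bounds_small_d:
  assumes "(\<alpha>, \<beta>) \<in> A_set d" "3 \<le> d" "d \<le> 50"
  shows "real_of_rat \<alpha> \<le> 19992" "1 / 999600 \<le> real_of_rat \<beta>"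
proof -
  have d_bounds: "0 < d^2 - 1" "8 * (d^2 - 1) \<le> 19992" "8 * d * (d^2 - 1) \<le> 999600"
    using assms(2,3) mult_mono[of d 50 d 50] mult_mono[of d 50 "d^2 - 1" 2499] mult_mono[of 3 d 3 d]
    by (auto simp: power2_eq_square)
  have "\<alpha> \<le> of_int (8 * (d^2 - 1))" using A_set_fst_le[OF assms(1)] assms(2) by simp
  also have "\<dots> \<le> of_int 19992" unfolding of_int_le_iff by (rule d_bounds(2))
  finally show "real_of_rat \<alpha> \<le> 19992" using of_rat_less_eq[of \<alpha> 19992] by simp
  have "0 < 8 * d * (d^2 - 1)" using d_bounds(1) assms(2) by simp
  then have "(1::rat) / 999600 \<le> 1 / of_int (8 * d * (d^2 - 1))"
    using d_bounds(3) by (simp add: frac_le del: of_int_mult of_int_diff of_int_power)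
  also have "\<dots> \<le> \<beta>" using A_set_snd_ge[OF assms(1)] assms(2) by simp
  finally show "1 / 999600 \<le> real_of_rat \<beta>"
    using of_rat_less_eq[of "1 / 999600" \<beta>] by (simp add: of_rat_divide)
qed

lemma ln_div_ln_bounds:
  fixes Y M c :: real
  assumes "1 < Y" "Y \<le> M" "ln M \<le> c * ln Y"
  shows "1 \<le> ln M / ln Y \<and> ln M / ln Y \<le> c"
proof -
  have "0 < ln Y" "ln Y \<le> ln M" using assms(1,2) by simp_all
  then show ?thesis using assms(3) by (simp add: divide_le_eq le_divide_eq)
qed

theorem lemma5p3:
  fixes d :: int and \<alpha> \<beta> :: rat and l :: nat and y1 y2 :: int
  assumes "3 \<le> d" and "d \<le> 50"
    and "(\<alpha>, \<beta>) \<in> A_set d"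
    and "prime l" and "l > 1000"
    and "4 * \<beta> * of_int y2 ^ l - \<alpha>^2 * of_int y1 ^ (2 * l) = of_int (d^2 - 1)"
    and "\<bar>y1\<bar> \<ge> 2" and "y2 \<ge> 2" and "y2 \<noteq> y1^2"
  shows "1 \<le> ln (real_of_int (max (y1^2) y2)) / ln (real_of_int (y1^2)) \<and>
         ln (real_of_int (max (y1^2) y2)) / ln (real_of_int (y1^2)) \<le> 1.03"
proof -
  define Y Z where "Y = real_of_int (y1^2)" and "Z = real_of_int y2"
  have "4 \<le> Y"
    using assms(7) power_mono[of 2 "\<bar>y1\<bar>" 2] of_int_le_iff[of 4 "y1^2"] unfolding Y_def by simp
  then have "1 \<le> Y ^ l" by (simp add: one_le_power)
  have "4 * real_of_rat \<beta> * Z ^ l - (real_of_rat \<alpha>)^2 * Y ^ l = real_of_int (d^2 - 1)"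
    using arg_cong[OF assms(6), of real_of_rat] unfolding Y_def Z_def
    by (simp add: of_rat_diff of_rat_mult of_rat_power power_mult)
  moreover have "real_of_int (d^2 - 1) \<le> 2499"
    using mult_mono[of d 50 d 50] assms(1,2) of_int_le_iff[of "d^2 - 1" 2499]
    by (simp add: power2_eq_square)
  ultimately have "Z ^ l \<le> (19992^2 + 2499) / (4 * (1 / 999600)) * Y ^ l"
    using A_set_bounds_small_d[OF assms(3,1,2)] A_setD(1)[OF assms(3)] \<open>1 \<le> Y ^ l\<close>
    by (intro power_le_of_equation) auto
  also have "\<dots> \<le> 2^47 * Y ^ l" using \<open>1 \<le> Y ^ l\<close> by simp
  finally have "ln Z \<le> 1.03 * ln Y"
    by (rule ln_le_of_power_le_2_47) (use \<open>4 \<le> Y\<close> assms(5,8) in \<open>auto simp: Z_def\<close>)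
  moreover have "real_of_int (max (y1^2) y2) \<in> {Y, Z}" "Y \<le> real_of_int (max (y1^2) y2)"
    unfolding Y_def Z_def by (auto simp: max_def)
  ultimately show ?thesis unfolding Y_def[symmetric]
    using ln_div_ln_bounds[of Y "real_of_int (max (y1^2) y2)" "1.03"] \<open>4 \<le> Y\<close> by auto
qed

end
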